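(* Let $n\geq 4$ and let $S$ be any meet-semilattice of order $n$ having a greatest element. Then \[ \sum_{s\in S}|\mathrm{cov}_1(s)|\leq\sum_{s\in F_n}|\mathrm{cov}_1(s)|, \] where $F_n=\{0,a_1,\ldots,a_{n-2},1\}$ is the meet-semilattice of order $n$ with least element $0$, greatest element $1$, and $a_1,\ldots,a_{n-2}$ pairwise incomparable.
   Context: The meet is written as multiplication. For a semilattice $S$ and $s\in S$, $\mathrm{cov}_1(s)$ denotes the set of equations $xa=xa'$ ($a,a'\in S$; formally ordered pairs $(a,a')$) satisfied by $s$, i.e. with $sa=sa'$; thus $|\mathrm{cov}_1(s)|=|\{(a,a')\in S\times S\mid sa=sa'\}|$. *)

theory Defs
  imports Main
begin

definition meet_semilattice :: "'a set \<Rightarrow> ('a \<Rightarrow> 'a \<Rightarrow> 'a) \<Rightarrow> bool" where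
  "meet_semilattice S m \<longleftrightarrow>
     (\<forall>x\<in>S. \<forall>y\<in>S. m x y \<in> S) \<and>
     (\<forall>x\<in>S. m x x = x) \<and>
     (\<forall>x\<in>S. \<forall>y\<in>S. m x y = m y x) \<and>
     (\<forall>x\<in>S. \<forall>y\<in>S. \<forall>z\<in>S. m (m x y) z = m x (m y z))"

text \<open>Greatest element of the semilattice (w.r.t. the order x \<le> y iff m x y = x).\<close>
definition has_greatest :: "'a set \<Rightarrow> ('a \<Rightarrow> 'a \<Rightarrow> 'a) \<Rightarrow> bool" where
  "has_greatest S m \<longleftrightarrow> (\<exists>t\<in>S. \<forall>x\<in>S. m x t = x)"

text \<open>cov_1(s): the set of equations x a = x a' (pairs (a,a')) satisfied by s.\<close>
definition cov1 :: "'a set \<Rightarrow> ('a \<Rightarrow> 'a \<Rightarrow> 'a) \<Rightarrow> 'a \<Rightarrow> ('a \<times> 'a) set" where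
  "cov1 S m s = {(a, a'). a \<in> S \<and> a' \<in> S \<and> m s a = m s a'}"

text \<open>The semilattice F_n on carrier {0..<n}: 0 is the least element, n-1 the greatest,
  and 1,...,n-2 are pairwise incomparable atoms.\<close>
definition Fn_carrier :: "nat \<Rightarrow> nat set" where
  "Fn_carrier n = {0..<n}"

definition Fn_meet :: "nat \<Rightarrow> nat \<Rightarrow> nat \<Rightarrow> nat" where
  "Fn_meet n x y = (if x = y then x else if x = n - 1 then y else if y = n - 1 then x else 0)"

end

theory Submission
  imports Defs
begin

(*
  For s in S the map x \<mapsto> s x sends S onto the down-set of s, and its fibre over s is
  the up-set of s; |cov_1(s)| is the sum of the squared fibre sizes. With u = |\<up>s|,
  d = |\<down>s| and the other d - 1 fibres nonempty with total size n - u, this is at most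
  u\<^sup>2 + (n + 2 - u - d)\<^sup>2 + d - 2. For s strictly between the least and greatest
  element, u, d \<ge> 2 and u + d \<le> n + 1, which bounds the term by (n - 2)\<^sup>2 + 4 + 2(u - d);
  since \<Sum>u = \<Sum>d (both count comparable pairs) the correction terms cancel, and the
  resulting bound n\<^sup>2 + n + (n - 2)((n - 2)\<^sup>2 + 4) is attained in F_n.
*)

lemma card_eq_sum_card_fibres:
  assumes "finite A"
  shows "card A = (\<Sum>v\<in>f ` A. card {a\<in>A. f a = v})"
proof -
  have "A = (\<Union>v\<in>f ` A. {a\<in>A. f a = v})" by auto
  also have "card \<dots> = (\<Sum>v\<in>f ` A. card {a\<in>A. f a = v})"
    by (rule card_UN_disjoint) (use assms in auto)
  finally show ?thesis .
qed

lemma card_pairs_same_image: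
  assumes "finite A"
  shows "card {(a, b). a \<in> A \<and> b \<in> A \<and> f a = f b} = (\<Sum>v\<in>f ` A. card {a\<in>A. f a = v} ^ 2)"
proof -
  have "{(a, b). a \<in> A \<and> b \<in> A \<and> f a = f b}
          = (\<Union>v\<in>f ` A. {a\<in>A. f a = v} \<times> {a\<in>A. f a = v})" by auto
  also have "card \<dots> = (\<Sum>v\<in>f ` A. card ({a\<in>A. f a = v} \<times> {a\<in>A. f a = v}))"
    by (rule card_UN_disjoint) (use assms in auto)
  finally show ?thesis by (simp add: card_cartesian_product power2_eq_square)
qed

lemma sum_power2_le_power2_sum:
  fixes f :: "'a \<Rightarrow> nat"
  shows "(\<Sum>i\<in>I. f i ^ 2) \<le> (\<Sum>i\<in>I. f i) ^ 2"
proof (induction I rule: infinite_finite_induct)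
  case (insert j I)
  then show ?case by (simp add: power2_sum)
qed simp_all

(* Equality when all but one of the k i equal 1. *)
lemma sum_power2_le_of_ge_1:
  fixes k :: "'a \<Rightarrow> nat"
  assumes "finite I" and "\<And>i. i \<in> I \<Longrightarrow> k i \<ge> 1"
  shows "int (\<Sum>i\<in>I. k i ^ 2) \<le> (int (sum k I) - int (card I) + 1) ^ 2 + int (card I) - 1"
proof -
  define e where "e i = k i - 1" for i
  have k: "k i = e i + 1" if "i \<in> I" for i
    using assms(2)[OF that] unfolding e_def by simp
  have "(\<Sum>i\<in>I. k i ^ 2) = (\<Sum>i\<in>I. e i ^ 2 + 2 * e i + 1)"
    by (rule sum.cong) (simp_all add: k power2_eq_square algebra_simps)
  also have "\<dots> = (\<Sum>i\<in>I. e i ^ 2) + 2 * sum e I + card I"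
    by (simp only: sum.distrib sum_distrib_left) simp
  also have "\<dots> \<le> (sum e I) ^ 2 + 2 * sum e I + card I"
    using sum_power2_le_power2_sum[of e I] by simp
  finally have "int (\<Sum>i\<in>I. k i ^ 2) \<le> int ((sum e I) ^ 2 + 2 * sum e I + card I)"
    by (simp only: of_nat_le_iff)
  moreover have "sum k I = (\<Sum>i\<in>I. e i + 1)"
    by (rule sum.cong) (simp_all add: k)
  then have "sum k I = sum e I + card I"
    by (simp only: sum.distrib) simp
  ultimately show ?thesis by (simp add: power2_sum)
qed

lemma quadratic_bound_between:
  fixes n u d :: int
  assumes "4 \<le> n" "2 \<le> u" "2 \<le> d" "u + d \<le> n + 1"
  shows "u\<^sup>2 + (n + 2 - u - d)\<^sup>2 + d - 2 \<le> (n - 2)\<^sup>2 + 4 + 2 * (u - d)"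
proof -
  define e f where "e = u - 2" and "f = d - 2"
  have "(e + f) * (e + f) \<le> (n - 3) * (e + f)" and "e * e \<le> (n - 3) * e"
    using assms unfolding e_def f_def by (intro mult_right_mono; simp)+
  moreover have "0 \<le> (n - 4) * f" using assms unfolding f_def by simp
  ultimately show ?thesis
    unfolding e_def f_def by (simp add: power2_eq_square algebra_simps)
qed

locale finite_meet_semilattice =
  fixes S :: "'a set" and m :: "'a \<Rightarrow> 'a \<Rightarrow> 'a"
  assumes meet_semilattice: "meet_semilattice S m"
    and finite_carrier: "finite S"
begin

lemma meet_closed: "x \<in> S \<Longrightarrow> y \<in> S \<Longrightarrow> m x y \<in> S"
  and meet_idem: "x \<in> S \<Longrightarrow> m x x = x"
  and meet_comm: "x \<in> S \<Longrightarrow> y \<in> S \<Longrightarrow> m x y = m y x"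
  and meet_assoc: "x \<in> S \<Longrightarrow> y \<in> S \<Longrightarrow> z \<in> S \<Longrightarrow> m (m x y) z = m x (m y z)"
  using meet_semilattice unfolding meet_semilattice_def by blast+

lemma meet_absorb: "x \<in> S \<Longrightarrow> y \<in> S \<Longrightarrow> m x (m x y) = m x y"
  by (metis meet_assoc meet_idem)

definition upset :: "'a \<Rightarrow> 'a set" where
  "upset s = {x\<in>S. m s x = s}"

definition downset :: "'a \<Rightarrow> 'a set" where
  "downset s = {x\<in>S. m s x = x}"

lemma finite_upset: "finite (upset s)" and finite_downset: "finite (downset s)"
  unfolding upset_def downset_def using finite_carrier by simp_all

lemma image_meet_eq_downset: "s \<in> S \<Longrightarrow> m s ` S = downset s"
  unfolding downset_def by (auto simp: meet_closed meet_absorb intro: rev_image_eqI)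

lemma upset_Int_downset: "upset s \<inter> downset s \<subseteq> {s}"
  unfolding upset_def downset_def by auto

lemma sum_card_upset_eq_sum_card_downset:
  "(\<Sum>s\<in>S. card (upset s)) = (\<Sum>s\<in>S. card (downset s))"
proof -
  have "Sigma S downset = prod.swap ` Sigma S upset"
    unfolding upset_def downset_def by (auto simp: meet_comm image_iff)
  then have "card (Sigma S downset) = card (Sigma S upset)"
    by (simp add: card_image)
  then show ?thesis
    using finite_carrier by (simp add: card_SigmaI finite_upset finite_downset)
qed

lemma ex_lower_bound:
  assumes "finite A" "A \<noteq> {}" "A \<subseteq> S"
  shows "\<exists>b\<in>S. \<forall>y\<in>A. m b y = b"
  using assms
proof (induction A rule: finite_ne_induct)
  case (singleton x)
  then show ?case using meet_idem by blast
next
  case (insert x A)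
  then obtain b where b: "b \<in> S" "\<forall>y\<in>A. m b y = b" by auto
  have "m (m x b) y = m x b" if "y \<in> insert x A" for y
    using that insert.prems b
    by (auto simp: meet_assoc meet_absorb meet_comm[of b x] meet_closed)
  then show ?case using insert.prems b by (auto intro: meet_closed)
qed

lemma upset_top: "t \<in> S \<Longrightarrow> \<forall>x\<in>S. m x t = x \<Longrightarrow> upset t = {t}"
  and downset_top: "t \<in> S \<Longrightarrow> \<forall>x\<in>S. m x t = x \<Longrightarrow> downset t = S"
  unfolding upset_def downset_def by (auto simp: meet_comm meet_idem)

lemma upset_bottom: "\<forall>y\<in>S. m b y = b \<Longrightarrow> upset b = S"
  and downset_bottom: "b \<in> S \<Longrightarrow> \<forall>y\<in>S. m b y = b \<Longrightarrow> downset b = {b}"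
  unfolding upset_def downset_def by auto

lemma card_upset_downset_between:
  assumes s: "s \<in> S" "s \<noteq> t" "s \<noteq> b"
    and t: "t \<in> S" "\<forall>x\<in>S. m x t = x" and b: "b \<in> S" "\<forall>y\<in>S. m b y = b"
  shows "2 \<le> card (upset s)" and "2 \<le> card (downset s)"
    and "card (upset s) + card (downset s) \<le> card S + 1"
proof -
  have "{s, t} \<subseteq> upset s" and "{s, b} \<subseteq> downset s"
    unfolding upset_def downset_def using s t b by (auto simp: meet_idem meet_comm[of s b])
  then show "2 \<le> card (upset s)" and "2 \<le> card (downset s)"
    using s by (metis card_2_iff card_mono finite_upset finite_downset)+
  have "card (upset s \<inter> downset s) \<le> 1"
    using card_mono[OF _ upset_Int_downset] by fastforce
  moreover have "card (upset s \<union> downset s) \<le> card S"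
    by (rule card_mono[OF finite_carrier]) (auto simp: upset_def downset_def)
  ultimately show "card (upset s) + card (downset s) \<le> card S + 1"
    using card_Un_Int[OF finite_upset[of s] finite_downset[of s]] by linarith
qed

lemma card_cov1_le:
  assumes s: "s \<in> S"
  defines "u \<equiv> int (card (upset s))" and "d \<equiv> int (card (downset s))"
  shows "int (card (cov1 S m s)) \<le> u\<^sup>2 + (int (card S) + 2 - u - d)\<^sup>2 + d - 2"
proof -
  define k where "k v = card {a\<in>S. m s a = v}" for v
  define D' where "D' = downset s - {s}"
  have s_down: "s \<in> downset s" using s meet_idem unfolding downset_def by simp
  have ks: "k s = card (upset s)" unfolding k_def upset_def by simp
  have "card (cov1 S m s) = (\<Sum>v\<in>downset s. k v ^ 2)"
    unfolding cov1_def k_def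
    using card_pairs_same_image[OF finite_carrier, of "m s"] image_meet_eq_downset[OF s]
    by simp
  also have "\<dots> = k s ^ 2 + (\<Sum>v\<in>D'. k v ^ 2)"
    unfolding D'_def by (rule sum.remove[OF finite_downset s_down])
  finally have cov: "card (cov1 S m s) = k s ^ 2 + (\<Sum>v\<in>D'. k v ^ 2)" .
  have "card S = (\<Sum>v\<in>downset s. k v)"
    unfolding k_def using card_eq_sum_card_fibres[OF finite_carrier, of "m s"] image_meet_eq_downset[OF s]
    by simp
  also have "\<dots> = k s + sum k D'"
    unfolding D'_def by (rule sum.remove[OF finite_downset s_down])
  finally have sum_k: "card S = k s + sum k D'" .
  have "card (downset s) > 0"
    using s_down finite_downset card_gt_0_iff by blast
  then have card_D': "int (card D') = d - 1"
    unfolding D'_def d_def using s_down finite_downset by (simp add: card_Diff_singleton of_nat_diff)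
  have "k v \<ge> 1" if "v \<in> D'" for v
  proof -
    have "v \<in> {a\<in>S. m s a = v}" using that unfolding D'_def downset_def by auto
    then have "card {a\<in>S. m s a = v} > 0" using finite_carrier card_gt_0_iff by fastforce
    then show ?thesis unfolding k_def by simp
  qed
  then have "int (\<Sum>v\<in>D'. k v ^ 2) \<le> (int (sum k D') - int (card D') + 1)\<^sup>2 + int (card D') - 1"
    using sum_power2_le_of_ge_1[of D' k] finite_downset unfolding D'_def by simp
  then show ?thesis
    unfolding cov u_def using sum_k card_D' ks by (simp add: algebra_simps)
qed


lemma sum_card_cov1_le:
  assumes card: "4 \<le> card S" and t: "t \<in> S" "\<forall>x\<in>S. m x t = x"
  defines "n \<equiv> int (card S)"
  shows "int (\<Sum>s\<in>S. card (cov1 S m s)) \<le> n\<^sup>2 + n + (n - 2) * ((n - 2)\<^sup>2 + 4)"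
proof -
  obtain b where b: "b \<in> S" "\<forall>y\<in>S. m b y = b"
    using ex_lower_bound[OF finite_carrier _ subset_refl] card by fastforce
  have "t \<noteq> b"
    using upset_top[OF t] upset_bottom[OF b(2)] card by auto
  define M where "M = S - {t, b}"
  define c u d where "c s = int (card (cov1 S m s))" and "u s = int (card (upset s))"
    and "d s = int (card (downset s))" for s
  have split: "sum f S = f t + f b + sum f M" for f :: "'a \<Rightarrow> int"
  proof -
    have S: "S = insert t (insert b M)" and "t \<notin> insert b M" "b \<notin> M" "finite M"
      unfolding M_def using t b \<open>t \<noteq> b\<close> finite_carrier by auto
    then show ?thesis by (subst S) simp
  qed
  have card_M: "int (card M) = n - 2"
    unfolding M_def n_def using t b \<open>t \<noteq> b\<close> finite_carrier card
    by (simp add: card_Diff_subset of_nat_diff)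
  have ut: "u t = 1" and dt: "d t = n" and ub: "u b = n" and db: "d b = 1"
    unfolding u_def d_def n_def upset_top[OF t] downset_top[OF t]
      upset_bottom[OF b(2)] downset_bottom[OF b] by simp_all
  have "c t \<le> n" and "c b \<le> n\<^sup>2"
    using card_cov1_le[OF t(1)] card_cov1_le[OF b(1)] ut dt ub db
    unfolding c_def u_def d_def n_def by simp_all
  moreover have "c s \<le> (n - 2)\<^sup>2 + 4 + 2 * (u s - d s)" if "s \<in> M" for s
  proof -
    have s: "s \<in> S" "s \<noteq> t" "s \<noteq> b" using that unfolding M_def by auto
    show ?thesis
      using card_cov1_le[OF s(1)] card_upset_downset_between[OF s t b] card
        quadratic_bound_between[of n "u s" "d s"]
      unfolding c_def u_def d_def n_def by linarith
  qed
  then have "sum c M \<le> (\<Sum>s\<in>M. (n - 2)\<^sup>2 + 4 + 2 * (u s - d s))"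
    by (rule sum_mono)
  moreover have "(\<Sum>s\<in>M. u s - d s) = 0"
    using split[of "\<lambda>s. u s - d s"] arg_cong[where f=int, OF sum_card_upset_eq_sum_card_downset]
      ut dt ub db
    unfolding u_def d_def by (simp add: sum_subtractf)
  then have "(\<Sum>s\<in>M. (n - 2)\<^sup>2 + 4 + 2 * (u s - d s)) = (n - 2) * ((n - 2)\<^sup>2 + 4)"
    by (simp only: sum.distrib sum_distrib_left[symmetric] sum_constant card_M) (simp add: ring_distribs)
  moreover have "int (\<Sum>s\<in>S. card (cov1 S m s)) = sum c S"
    unfolding c_def by simp
  ultimately show ?thesis
    using split[of c] by linarith
qed

end

lemma cov1_Fn_bottom:
  assumes "2 \<le> n"
  shows "cov1 (Fn_carrier n) (Fn_meet n) 0 = Fn_carrier n \<times> Fn_carrier n"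
  using assms by (auto simp: cov1_def Fn_meet_def Fn_carrier_def)

lemma diagonal_subset_cov1: "(\<lambda>a. (a, a)) ` S \<subseteq> cov1 S m s"
  by (auto simp: cov1_def)

lemma cov1_Fn_atom_superset:
  assumes "0 < i" "i < n - 1"
  defines "A \<equiv> {i, n - 1}"
  shows "A \<times> A \<union> (Fn_carrier n - A) \<times> (Fn_carrier n - A) \<subseteq> cov1 (Fn_carrier n) (Fn_meet n) i"
  using assms by (auto simp: cov1_def Fn_meet_def Fn_carrier_def)

lemma sum_card_cov1_Fn_ge:
  assumes "2 \<le> n"
  shows "n\<^sup>2 + n + (n - 2) * ((n - 2)\<^sup>2 + 4)
           \<le> (\<Sum>s\<in>Fn_carrier n. card (cov1 (Fn_carrier n) (Fn_meet n) s))"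
proof -
  let ?F = "Fn_carrier n" and ?c = "\<lambda>s. card (cov1 (Fn_carrier n) (Fn_meet n) s)"
  have fin: "finite (cov1 ?F (Fn_meet n) s)" for s
    by (rule finite_subset[of _ "?F \<times> ?F"]) (auto simp: cov1_def Fn_carrier_def)
  have "?c 0 = n\<^sup>2"
    unfolding cov1_Fn_bottom[OF assms] by (simp add: card_cartesian_product Fn_carrier_def power2_eq_square)
  moreover have "n \<le> ?c (n - 1)"
    using card_mono[OF fin diagonal_subset_cov1] by (simp add: card_image inj_on_def Fn_carrier_def)
  moreover have "(n - 2) * ((n - 2)\<^sup>2 + 4) \<le> (\<Sum>s\<in>{1..<n - 1}. ?c s)"
  proof -
    have "(n - 2)\<^sup>2 + 4 \<le> ?c i" if "i \<in> {1..<n - 1}" for i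
    proof -
      define A where "A = {i, n - 1}"
      have "A \<subseteq> ?F" "card A = 2"
        using that unfolding A_def Fn_carrier_def by auto
      moreover have "finite A" unfolding A_def by simp
      ultimately have "card (?F - A) = n - 2"
        by (simp add: card_Diff_subset Fn_carrier_def)
      with \<open>finite A\<close> \<open>card A = 2\<close>
      have "card (A \<times> A \<union> (?F - A) \<times> (?F - A)) = (n - 2)\<^sup>2 + 4"
        by (subst card_Un_disjoint) (auto simp: card_cartesian_product power2_eq_square Fn_carrier_def)
      moreover have "A \<times> A \<union> (?F - A) \<times> (?F - A) \<subseteq> cov1 ?F (Fn_meet n) i"
        using cov1_Fn_atom_superset[of i n] that unfolding A_def by simp
      ultimately show ?thesis
        using card_mono[OF fin] by metis
    qed
    then have "(\<Sum>s\<in>{1..<n - 1}. (n - 2)\<^sup>2 + 4) \<le> (\<Sum>s\<in>{1..<n - 1}. ?c s)"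
      by (rule sum_mono)
    then show ?thesis by (simp add: numeral_2_eq_2)
  qed
  moreover have "?F = insert 0 (insert (n - 1) {1..<n - 1})"
    using assms unfolding Fn_carrier_def by (auto simp: atLeastLessThan_iff)
  then have "(\<Sum>s\<in>?F. ?c s) = ?c 0 + ?c (n - 1) + (\<Sum>s\<in>{1..<n - 1}. ?c s)"
    using assms by simp
  ultimately show ?thesis by linarith
qed

theorem theorem3:
  fixes S :: "'a set" and m :: "'a \<Rightarrow> 'a \<Rightarrow> 'a" and n :: nat
  assumes "n \<ge> 4"
    and "finite S" and "card S = n"
    and "meet_semilattice S m"
    and "has_greatest S m"
  shows "(\<Sum>s\<in>S. card (cov1 S m s))
           \<le> (\<Sum>s\<in>Fn_carrier n. card (cov1 (Fn_carrier n) (Fn_meet n) s))"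
proof -
  interpret finite_meet_semilattice S m
    using assms by unfold_locales
  obtain t where "t \<in> S" "\<forall>x\<in>S. m x t = x"
    using \<open>has_greatest S m\<close> unfolding has_greatest_def by blast
  then have "int (\<Sum>s\<in>S. card (cov1 S m s))
               \<le> (int n)\<^sup>2 + int n + (int n - 2) * ((int n - 2)\<^sup>2 + 4)"
    using sum_card_cov1_le assms by simp
  also have "\<dots> = int (n\<^sup>2 + n + (n - 2) * ((n - 2)\<^sup>2 + 4))"
    using \<open>n \<ge> 4\<close> by (simp add: of_nat_diff)
  finally show ?thesis
    using sum_card_cov1_Fn_ge[of n] \<open>n \<ge> 4\<close> by linarith
qed

end
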